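(* Let $\mathcal{X}=\mathcal{X}_1\times\cdots\times\mathcal{X}_K$, let $(\pi_n)_{n\ge1}\subset\mathcal{P}(\mathcal{X})$ possibly depend on random data $Y^{(n)}\sim Q^{(n)}$, and assume (A1): there exist $\tilde\pi\in\mathcal{P}(\mathcal{X})$ and coordinate-wise maps $\phi_n(\mathbf{x})=(\phi_{n,1}(x_1),\dots,\phi_{n,K}(x_K))$, with each $\phi_{n,j}:\mathcal{X}_j\to\mathcal{X}_j$ injective and measurable, such that $\|\tilde\pi_n-\tilde\pi\|_{TV}\to0$ in $Q^{(n)}$-probability, where $\tilde\pi_n=\pi_n\circ\phi_n^{-1}$. Let $P_n$ and $\tilde P_n$ be the deterministic-scan Gibbs samplers targeting $\pi_n$ and $\tilde\pi_n$ respectively. Then for every $t$ and $M\ge1$, \[ \sup_{\mu_n\in\mathcal{N}(\pi_n,M)}\|\mu_nP_n^t-\pi_n\|_{TV}=\sup_{\tilde\mu_n\in\mathcal{N}(\tilde\pi_n,M)}\|\tilde\mu_n\tilde P_n^t-\tilde\pi_n\|_{TV}. \]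
   Context: $\mathcal{P}(\mathcal{X})$ is the set of probability distributions on $\mathcal{X}$; $\|\mu-\nu\|_{TV}=\sup_A|\mu(A)-\nu(A)|$. The deterministic-scan Gibbs sampler targeting $\pi$ is the product $P_1\cdots P_K$ of kernels, where $P_i$ resamples coordinate $x_i$ from $\pi(\mathrm{d}x_i\mid\mathbf{x}^{(-i)})$ leaving other coordinates unchanged. $\mathcal{N}(\pi,M)=\{\mu\in\mathcal{P}(\mathcal{X}):\mu(A)\le M\pi(A)\ \forall A\}$. *)

theory Defs
  imports "HOL-Probability.Probability"
begin

text \<open>Product space X_1 x ... x X_K, coordinates indexed by {..<K}, all coordinate
  spaces living in one type 'a with sigma-algebras Ms j.\<close>

abbreviation prodX :: "nat \<Rightarrow> (nat \<Rightarrow> 'a measure) \<Rightarrow> (nat \<Rightarrow> 'a) measure" where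
  "prodX K Ms \<equiv> PiM {..<K} Ms"

definition tv_dist :: "'b measure \<Rightarrow> 'b measure \<Rightarrow> 'b measure \<Rightarrow> real" where
  "tv_dist X \<mu> \<nu> = (SUP A\<in>sets X. \<bar>measure \<mu> A - measure \<nu> A\<bar>)"

definition nbhd :: "'b measure \<Rightarrow> 'b measure \<Rightarrow> real \<Rightarrow> 'b measure set" where
  "nbhd X \<pi> M = {\<mu> \<in> space (prob_algebra X). \<forall>A\<in>sets X. measure \<mu> A \<le> M * measure \<pi> A}"

text \<open>kappa is a regular conditional distribution of coordinate i given the other
  coordinates under pi: a Markov kernel depending only on the coordinates other than i,
  such that for every measurable set A determined by the coordinates other than i and
  every measurable D, integral over A of kappa(x, D) d pi = pi(A and x_i in D).\<close>
definition cond_dist ::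
  "nat \<Rightarrow> (nat \<Rightarrow> 'a measure) \<Rightarrow> nat \<Rightarrow> (nat \<Rightarrow> 'a) measure \<Rightarrow> ((nat \<Rightarrow> 'a) \<Rightarrow> 'a measure) \<Rightarrow> bool"
  where
  "cond_dist K Ms i \<pi> \<kappa> \<longleftrightarrow>
     \<kappa> \<in> prodX K Ms \<rightarrow>\<^sub>M prob_algebra (Ms i) \<and>
     (\<forall>x\<in>space (prodX K Ms). \<forall>y\<in>space (Ms i). \<kappa> (x(i := y)) = \<kappa> x) \<and>
     (\<forall>A\<in>sets (prodX K Ms).
        (\<forall>x\<in>space (prodX K Ms). \<forall>y\<in>space (Ms i). (x \<in> A \<longleftrightarrow> x(i := y) \<in> A)) \<longrightarrow>
        (\<forall>D\<in>sets (Ms i).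
           (\<integral>\<^sup>+ x. indicator A x * emeasure (\<kappa> x) D \<partial>\<pi>)
             = emeasure \<pi> (A \<inter> {x \<in> space (prodX K Ms). x i \<in> D})))"

definition gibbs_step ::
  "nat \<Rightarrow> (nat \<Rightarrow> 'a measure) \<Rightarrow> ((nat \<Rightarrow> 'a) \<Rightarrow> 'a measure) \<Rightarrow> nat \<Rightarrow> (nat \<Rightarrow> 'a) \<Rightarrow> (nat \<Rightarrow> 'a) measure"
  where
  "gibbs_step K Ms \<kappa> i x = distr (\<kappa> x) (prodX K Ms) (\<lambda>y. x(i := y))"

primrec scan_kernel ::
  "'b measure \<Rightarrow> (nat \<Rightarrow> 'b \<Rightarrow> 'b measure) \<Rightarrow> nat \<Rightarrow> 'b \<Rightarrow> 'b measure" where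
  "scan_kernel X P 0 = (\<lambda>x. return X x)"
| "scan_kernel X P (Suc k) = (\<lambda>x. bind (scan_kernel X P k x) (P k))"

definition gibbs_kernel ::
  "nat \<Rightarrow> (nat \<Rightarrow> 'a measure) \<Rightarrow> (nat \<Rightarrow> (nat \<Rightarrow> 'a) \<Rightarrow> 'a measure) \<Rightarrow> (nat \<Rightarrow> 'a) \<Rightarrow> (nat \<Rightarrow> 'a) measure"
  where
  "gibbs_kernel K Ms \<kappa> = scan_kernel (prodX K Ms) (\<lambda>i. gibbs_step K Ms (\<kappa> i) i) K"

definition iter_kernel :: "'b measure \<Rightarrow> ('b \<Rightarrow> 'b measure) \<Rightarrow> nat \<Rightarrow> 'b measure" where
  "iter_kernel \<mu> P t = ((\<lambda>\<nu>. bind \<nu> P) ^^ t) \<mu>"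

definition coordmap :: "nat \<Rightarrow> (nat \<Rightarrow> 'a \<Rightarrow> 'a) \<Rightarrow> (nat \<Rightarrow> 'a) \<Rightarrow> (nat \<Rightarrow> 'a)" where
  "coordmap K \<phi> x = (\<lambda>j\<in>{..<K}. \<phi> j (x j))"

end

theory Submission
  imports Defs
begin

text \<open>Write \<Phi> for the coordinatewise map x \<mapsto> (\<phi>_1(x_1), ..., \<phi>_K(x_K)). Each \<phi>_j is a
  measurable injection with measurable images, so \<Phi> has a measurable left inverse \<Psi> and a
  measurable range. Pushing a conditional \<kappa>_i of \<pi> forward along \<Phi> gives a conditional of
  \<pi>\<circ>\<Phi>\<inverse>, and \<Phi> intertwines the corresponding Gibbs updates: (\<mu>P_i)\<circ>\<Phi>\<inverse> = (\<mu>\<circ>\<Phi>\<inverse>)P~_i.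
  Conditionals are unique only almost everywhere, but every law in N(\<pi>, M) is absolutely
  continuous w.r.t. \<pi>, and N(\<pi>, M) is preserved by the \<pi>-invariant updates; hence the
  intertwining holds for arbitrary versions of the conditionals along the whole chain. Finally
  \<mu> \<mapsto> \<mu>\<circ>\<Phi>\<inverse> maps N(\<pi>, M) onto N(\<pi>\<circ>\<Phi>\<inverse>, M) and preserves total variation, so the two
  suprema coincide.\<close>

section \<open>Probability laws and kernels\<close>

lemma sets_in_prob_algebra: "\<mu> \<in> space (prob_algebra X) \<Longrightarrow> sets \<mu> = sets X"
  by (simp add: space_prob_algebra)

lemma space_in_prob_algebra: "\<mu> \<in> space (prob_algebra X) \<Longrightarrow> space \<mu> = space X"
  by (rule sets_eq_imp_space_eq[OF sets_in_prob_algebra])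

lemma finite_measure_in_prob_algebra: "\<mu> \<in> space (prob_algebra X) \<Longrightarrow> finite_measure \<mu>"
  by (simp add: space_prob_algebra prob_space_def)

lemma emeasure_eq_measure_in_prob_algebra:
  "\<mu> \<in> space (prob_algebra X) \<Longrightarrow> emeasure \<mu> A = ennreal (measure \<mu> A)"
  by (rule finite_measure.emeasure_eq_measure[OF finite_measure_in_prob_algebra])

lemma bind_in_space_prob_algebra:
  assumes "\<mu> \<in> space (prob_algebra X)" and "P \<in> X \<rightarrow>\<^sub>M prob_algebra Y"
  shows "bind \<mu> P \<in> space (prob_algebra Y)"
  using assms by (simp add: space_prob_algebra sets_bind' prob_space_bind')

lemma distr_in_space_prob_algebra:
  assumes "\<mu> \<in> space (prob_algebra X)" and "f \<in> X \<rightarrow>\<^sub>M Y"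
  shows "distr \<mu> Y f \<in> space (prob_algebra Y)"
  using measurable_space[OF measurable_distr_prob_space[OF assms(2)] assms(1)] .

lemma measurable_in_prob_algebra:
  "\<mu> \<in> space (prob_algebra X) \<Longrightarrow> f \<in> X \<rightarrow>\<^sub>M Y \<Longrightarrow> f \<in> \<mu> \<rightarrow>\<^sub>M Y"
  using measurable_cong_sets[OF sets_in_prob_algebra refl] by blast

lemma tv_dist_distr_left_inverse:
  assumes f: "f \<in> X \<rightarrow>\<^sub>M Y" and g: "g \<in> Y \<rightarrow>\<^sub>M X" and gf: "\<And>x. x \<in> space X \<Longrightarrow> g (f x) = x"
    and a: "a \<in> space (prob_algebra X)" and b: "b \<in> space (prob_algebra X)"
  shows "tv_dist Y (distr a Y f) (distr b Y f) = tv_dist X a b"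
proof -
  have pre_sets: "(\<lambda>A. f -` A \<inter> space X) ` sets Y = sets X"
  proof
    show "(\<lambda>A. f -` A \<inter> space X) ` sets Y \<subseteq> sets X" using measurable_sets[OF f] by blast
    show "sets X \<subseteq> (\<lambda>A. f -` A \<inter> space X) ` sets Y"
    proof
      fix B assume B: "B \<in> sets X"
      have "f -` (g -` B \<inter> space Y) \<inter> space X = B"
        using gf measurable_space[OF f] sets.sets_into_space[OF B] by auto
      then show "B \<in> (\<lambda>A. f -` A \<inter> space X) ` sets Y"
        using measurable_sets[OF g B] by (intro image_eqI[where x="g -` B \<inter> space Y"]) auto
    qed
  qed
  have "measure (distr \<mu> Y f) A = measure \<mu> (f -` A \<inter> space X)"
    if "\<mu> \<in> space (prob_algebra X)" "A \<in> sets Y" for \<mu> A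
    using measure_distr[OF measurable_in_prob_algebra[OF that(1) f] that(2)] space_in_prob_algebra[OF that(1)]
    by simp
  then have "tv_dist Y (distr a Y f) (distr b Y f)
      = (SUP A\<in>sets Y. \<bar>measure a (f -` A \<inter> space X) - measure b (f -` A \<inter> space X)\<bar>)"
    unfolding tv_dist_def using a b by (intro SUP_cong) auto
  also have "\<dots> = (SUP B\<in>(\<lambda>A. f -` A \<inter> space X) ` sets Y. \<bar>measure a B - measure b B\<bar>)"
    by (simp add: image_image)
  finally show ?thesis unfolding pre_sets tv_dist_def .
qed

lemma scan_kernel_measurable:
  "(\<And>i. i < k \<Longrightarrow> P i \<in> X \<rightarrow>\<^sub>M prob_algebra X) \<Longrightarrow> scan_kernel X P k \<in> X \<rightarrow>\<^sub>M prob_algebra X"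
  by (induction k) (auto intro: measurable_bind_prob_space)

lemma bind_scan_kernel_Suc:
  assumes \<mu>: "sets \<mu> = sets X" and P: "\<And>i. i \<le> k \<Longrightarrow> P i \<in> X \<rightarrow>\<^sub>M prob_algebra X"
  shows "bind \<mu> (scan_kernel X P (Suc k)) = bind (bind \<mu> (scan_kernel X P k)) (P k)"
proof -
  have "scan_kernel X P k \<in> \<mu> \<rightarrow>\<^sub>M subprob_algebra X"
    using measurable_prob_algebraD[OF scan_kernel_measurable[of k P X]] P measurable_cong_sets[OF \<mu> refl]
    by auto
  then show ?thesis by (simp add: bind_assoc[OF _ measurable_prob_algebraD[OF P[OF order_refl]]])
qed

lemma scan_kernel_intertwine:
  assumes P: "\<And>i. i < k \<Longrightarrow> P i \<in> X \<rightarrow>\<^sub>M prob_algebra X"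
    and P': "\<And>i. i < k \<Longrightarrow> P' i \<in> Y \<rightarrow>\<^sub>M prob_algebra Y"
    and N: "N \<subseteq> space (prob_algebra X)"
    and closed: "\<And>i \<nu>. i < k \<Longrightarrow> \<nu> \<in> N \<Longrightarrow> bind \<nu> (P i) \<in> N"
    and comm: "\<And>i \<nu>. i < k \<Longrightarrow> \<nu> \<in> N \<Longrightarrow> distr (bind \<nu> (P i)) Y f = bind (distr \<nu> Y f) (P' i)"
    and \<nu>: "\<nu> \<in> N"
  shows "bind \<nu> (scan_kernel X P k) \<in> N \<and>
    distr (bind \<nu> (scan_kernel X P k)) Y f = bind (distr \<nu> Y f) (scan_kernel Y P' k)"
proof -
  have \<nu>_sets: "sets \<nu> = sets X" using \<nu> N sets_in_prob_algebra by blast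
  show ?thesis
    using P P' closed comm
  proof (induction k)
    case 0
    then show ?case using \<nu> \<nu>_sets by (simp add: bind_return'')
  next
    case (Suc k)
    then show ?case
      using \<nu>_sets bind_scan_kernel_Suc[of \<nu> X k P] bind_scan_kernel_Suc[of "distr \<nu> Y f" Y k P'] by simp
  qed
qed

lemma iter_kernel_intertwine:
  assumes closed: "\<And>\<nu>. \<nu> \<in> N \<Longrightarrow> bind \<nu> P \<in> N"
    and comm: "\<And>\<nu>. \<nu> \<in> N \<Longrightarrow> distr (bind \<nu> P) Y f = bind (distr \<nu> Y f) P'"
    and \<nu>: "\<nu> \<in> N"
  shows "iter_kernel \<nu> P t \<in> N \<and> distr (iter_kernel \<nu> P t) Y f = iter_kernel (distr \<nu> Y f) P' t"
  by (induction t) (use \<nu> closed comm in \<open>simp_all add: iter_kernel_def\<close>)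

section \<open>The neighbourhood N(\<pi>, M)\<close>

lemma nbhd_iff_emeasure_le:
  assumes \<pi>: "\<pi> \<in> space (prob_algebra X)" and M: "0 \<le> M"
  shows "\<nu> \<in> nbhd X \<pi> M \<longleftrightarrow>
    \<nu> \<in> space (prob_algebra X) \<and> (\<forall>A\<in>sets X. emeasure \<nu> A \<le> ennreal M * emeasure \<pi> A)"
proof -
  have "measure \<nu> A \<le> M * measure \<pi> A \<longleftrightarrow> emeasure \<nu> A \<le> ennreal M * emeasure \<pi> A"
    if "\<nu> \<in> space (prob_algebra X)" for A
    using emeasure_eq_measure_in_prob_algebra[OF that] emeasure_eq_measure_in_prob_algebra[OF \<pi>] M
    by (simp add: ennreal_mult[symmetric])
  then show ?thesis unfolding nbhd_def by auto
qed

lemma nbhd_le_scale_measure: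
  assumes \<nu>: "\<nu> \<in> nbhd X \<pi> M" and \<pi>: "\<pi> \<in> space (prob_algebra X)" and M: "0 \<le> M"
  shows "\<nu> \<le> scale_measure (ennreal M) \<pi>"
proof -
  have \<nu>X: "\<nu> \<in> space (prob_algebra X)" and le: "\<And>A. A \<in> sets X \<Longrightarrow> emeasure \<nu> A \<le> ennreal M * emeasure \<pi> A"
    using \<nu> unfolding nbhd_iff_emeasure_le[OF \<pi> M] by auto
  have "emeasure \<nu> A \<le> ennreal M * emeasure \<pi> A" for A
    using le[of A] emeasure_notin_sets[of A \<nu>] sets_in_prob_algebra[OF \<nu>X] by (cases "A \<in> sets X") auto
  then show ?thesis
    using sets_in_prob_algebra[OF \<nu>X] sets_in_prob_algebra[OF \<pi>]
      space_in_prob_algebra[OF \<nu>X] space_in_prob_algebra[OF \<pi>]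
    by (auto simp: le_measure_iff le_fun_def space_scale_measure)
qed

lemma nbhd_absolutely_continuous:
  assumes \<nu>: "\<nu> \<in> nbhd X \<pi> M" and \<pi>: "\<pi> \<in> space (prob_algebra X)" and M: "0 \<le> M"
  shows "absolutely_continuous \<pi> \<nu>"
  unfolding absolutely_continuous_def
proof
  fix N assume "N \<in> null_sets \<pi>"
  then have "N \<in> sets X" "emeasure \<pi> N = 0" using sets_in_prob_algebra[OF \<pi>] by auto
  then show "N \<in> null_sets \<nu>"
    using \<nu> sets_in_prob_algebra[of \<nu> X] unfolding nbhd_iff_emeasure_le[OF \<pi> M] by force
qed

lemma nbhd_bind_invariant:
  assumes P: "P \<in> X \<rightarrow>\<^sub>M prob_algebra X" and \<pi>: "\<pi> \<in> space (prob_algebra X)"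
    and inv: "bind \<pi> P = \<pi>" and \<nu>: "\<nu> \<in> nbhd X \<pi> M" and M: "0 \<le> M"
  shows "bind \<nu> P \<in> nbhd X \<pi> M"
proof -
  have \<nu>X: "\<nu> \<in> space (prob_algebra X)" using \<nu> by (simp add: nbhd_def)
  have "emeasure (bind \<nu> P) A \<le> ennreal M * emeasure \<pi> A" if A: "A \<in> sets X" for A
  proof -
    have PA: "(\<lambda>x. emeasure (P x) A) \<in> borel_measurable \<pi>"
      using measurable_compose[OF measurable_prob_algebraD[OF P] measurable_emeasure_subprob_algebra[OF A]]
      by (rule measurable_in_prob_algebra[OF \<pi>])
    have "emeasure (bind \<nu> P) A = (\<integral>\<^sup>+x. emeasure (P x) A \<partial>\<nu>)"
      by (rule emeasure_bind_prob_algebra[OF \<nu>X P A])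
    also have "\<dots> \<le> (\<integral>\<^sup>+x. emeasure (P x) A \<partial>scale_measure (ennreal M) \<pi>)"
      by (rule nn_integral_mono_measure)
        (use sets_in_prob_algebra[OF \<pi>] sets_in_prob_algebra[OF \<nu>X] nbhd_le_scale_measure[OF \<nu> \<pi> M] in auto)
    also have "\<dots> = ennreal M * (\<integral>\<^sup>+x. emeasure (P x) A \<partial>\<pi>)"
      by (rule nn_integral_scale_measure[OF PA])
    also have "(\<integral>\<^sup>+x. emeasure (P x) A \<partial>\<pi>) = emeasure \<pi> A"
      using emeasure_bind_prob_algebra[OF \<pi> P A] inv by simp
    finally show ?thesis .
  qed
  then show ?thesis
    unfolding nbhd_iff_emeasure_le[OF \<pi> M] using bind_in_space_prob_algebra[OF \<nu>X P] by blast
qed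

lemma nbhd_distr:
  assumes f: "f \<in> X \<rightarrow>\<^sub>M Y" and \<pi>: "\<pi> \<in> space (prob_algebra X)" and \<nu>: "\<nu> \<in> nbhd X \<pi> M"
  shows "distr \<nu> Y f \<in> nbhd Y (distr \<pi> Y f) M"
proof -
  have \<nu>X: "\<nu> \<in> space (prob_algebra X)" and le: "\<And>A. A \<in> sets X \<Longrightarrow> measure \<nu> A \<le> M * measure \<pi> A"
    using \<nu> by (auto simp: nbhd_def)
  have "measure (distr \<nu> Y f) A \<le> M * measure (distr \<pi> Y f) A" if A: "A \<in> sets Y" for A
    using le[OF measurable_sets[OF f A]]
      measure_distr[OF measurable_in_prob_algebra[OF \<nu>X f] A] space_in_prob_algebra[OF \<nu>X]
      measure_distr[OF measurable_in_prob_algebra[OF \<pi> f] A] space_in_prob_algebra[OF \<pi>]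
    by simp
  then show ?thesis using distr_in_space_prob_algebra[OF \<nu>X f] by (simp add: nbhd_def)
qed

lemma distr_distr_left_inverse:
  assumes f: "f \<in> X \<rightarrow>\<^sub>M Y" and g: "g \<in> Y \<rightarrow>\<^sub>M X" and gf: "\<And>x. x \<in> space X \<Longrightarrow> g (f x) = x"
    and \<mu>: "\<mu> \<in> space (prob_algebra X)"
  shows "distr (distr \<mu> Y f) X g = \<mu>"
proof -
  have "distr (distr \<mu> Y f) X g = distr \<mu> X (g \<circ> f)"
    by (rule distr_distr[OF g measurable_in_prob_algebra[OF \<mu> f]])
  also have "\<dots> = distr \<mu> X (\<lambda>x. x)"
    by (rule distr_cong) (auto simp: gf space_in_prob_algebra[OF \<mu>])
  finally show ?thesis using distr_id2[OF sets_in_prob_algebra[OF \<mu>, symmetric]] by simp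
qed

lemma distr_nbhd_image:
  assumes f: "f \<in> X \<rightarrow>\<^sub>M Y" and g: "g \<in> Y \<rightarrow>\<^sub>M X"
    and gf: "\<And>x. x \<in> space X \<Longrightarrow> g (f x) = x" and img: "f ` space X \<in> sets Y"
    and \<pi>: "\<pi> \<in> space (prob_algebra X)" and M: "0 \<le> M"
  shows "(\<lambda>\<mu>. distr \<mu> Y f) ` nbhd X \<pi> M = nbhd Y (distr \<pi> Y f) M"
proof
  show "(\<lambda>\<mu>. distr \<mu> Y f) ` nbhd X \<pi> M \<subseteq> nbhd Y (distr \<pi> Y f) M"
    using nbhd_distr[OF f \<pi>] by blast
next
  have \<pi>Y: "distr \<pi> Y f \<in> space (prob_algebra Y)" by (rule distr_in_space_prob_algebra[OF \<pi> f])
  show "nbhd Y (distr \<pi> Y f) M \<subseteq> (\<lambda>\<mu>. distr \<mu> Y f) ` nbhd X \<pi> M"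
  proof
    fix \<mu>' assume \<mu>': "\<mu>' \<in> nbhd Y (distr \<pi> Y f) M"
    then have \<mu>'Y: "\<mu>' \<in> space (prob_algebra Y)" by (simp add: nbhd_def)
    have "distr \<mu>' X g \<in> nbhd X (distr (distr \<pi> Y f) X g) M" by (rule nbhd_distr[OF g \<pi>Y \<mu>'])
    moreover have "distr (distr \<pi> Y f) X g = \<pi>" by (rule distr_distr_left_inverse[OF f g gf \<pi>])
    moreover have "distr (distr \<mu>' X g) Y f = \<mu>'"
    proof -
      have "f -` (space Y - f ` space X) \<inter> space X = {}" by blast
      then have "emeasure (distr \<pi> Y f) (space Y - f ` space X) = 0"
        using emeasure_distr[OF measurable_in_prob_algebra[OF \<pi> f], of "space Y - f ` space X"] img
          space_in_prob_algebra[OF \<pi>] by auto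
      then have "AE y in distr \<pi> Y f. y \<in> f ` space X"
        using img by (intro AE_I[where N="space Y - f ` space X"]) auto
      then have "AE y in \<mu>'. y \<in> f ` space X"
        using absolutely_continuous_AE[OF _ nbhd_absolutely_continuous[OF \<mu>' \<pi>Y M]]
          sets_in_prob_algebra[OF \<mu>'Y] by simp
      then have ae: "AE y in \<mu>'. f (g y) = y" by eventually_elim (auto simp: gf)
      have "distr (distr \<mu>' X g) Y f = distr \<mu>' Y (f \<circ> g)"
        by (rule distr_distr[OF f measurable_in_prob_algebra[OF \<mu>'Y g]])
      also have "\<dots> = distr \<mu>' Y (\<lambda>y. y)"
        by (rule distr_cong_AE[OF refl refl])
          (use ae measurable_in_prob_algebra[OF \<mu>'Y measurable_comp[OF g f]]
             measurable_ident_sets[OF sets_in_prob_algebra[OF \<mu>'Y]] in \<open>auto simp: o_def\<close>)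
      finally show ?thesis using distr_id2[OF sets_in_prob_algebra[OF \<mu>'Y, symmetric]] by simp
    qed
    ultimately show "\<mu>' \<in> (\<lambda>\<mu>. distr \<mu> Y f) ` nbhd X \<pi> M"
      by (intro image_eqI[where x="distr \<mu>' X g"]) auto
  qed
qed

section \<open>Gibbs updates and sets not depending on one coordinate\<close>

lemma measurable_fun_upd_pair:
  "i < K \<Longrightarrow> (\<lambda>(x, y). x(i := y)) \<in> prodX K Ms \<Otimes>\<^sub>M Ms i \<rightarrow>\<^sub>M prodX K Ms"
  using measurable_add_dim[of i "{..<K}" Ms] by (simp add: insert_absorb)

lemma measurable_fun_upd_coord:
  assumes "i < K" and "x \<in> space (prodX K Ms)"
  shows "(\<lambda>y. x(i := y)) \<in> Ms i \<rightarrow>\<^sub>M prodX K Ms"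
  using measurable_Pair2[OF measurable_fun_upd_pair[OF assms(1)] assms(2)] by simp

lemma fun_upd_in_space_prodX:
  "i < K \<Longrightarrow> x \<in> space (prodX K Ms) \<Longrightarrow> y \<in> space (Ms i) \<Longrightarrow> x(i := y) \<in> space (prodX K Ms)"
  by (auto simp: space_PiM PiE_iff extensional_def)

lemma coord_vimage_in_sets:
  "i < K \<Longrightarrow> D \<in> sets (Ms i) \<Longrightarrow> {x \<in> space (prodX K Ms). x i \<in> D} \<in> sets (prodX K Ms)"
  using measurable_sets[OF measurable_component_singleton[of i "{..<K}" Ms], of D]
  by (simp add: vimage_def Int_def conj_commute)

definition ignores_coord :: "nat \<Rightarrow> (nat \<Rightarrow> 'a measure) \<Rightarrow> nat \<Rightarrow> (nat \<Rightarrow> 'a) set \<Rightarrow> bool" where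
  "ignores_coord K Ms i A \<longleftrightarrow> A \<in> sets (prodX K Ms) \<and>
     (\<forall>x\<in>space (prodX K Ms). \<forall>y\<in>space (Ms i). x \<in> A \<longleftrightarrow> x(i := y) \<in> A)"

definition coord_rectangles :: "nat \<Rightarrow> (nat \<Rightarrow> 'a measure) \<Rightarrow> nat \<Rightarrow> (nat \<Rightarrow> 'a) set set" where
  "coord_rectangles K Ms i =
     {A \<inter> {x \<in> space (prodX K Ms). x i \<in> D} | A D. ignores_coord K Ms i A \<and> D \<in> sets (Ms i)}"

lemma ignores_coord_space: "i < K \<Longrightarrow> ignores_coord K Ms i (space (prodX K Ms))"
  unfolding ignores_coord_def using fun_upd_in_space_prodX by (auto dest: spec)

lemma coord_rectangles_subset_sets: "i < K \<Longrightarrow> coord_rectangles K Ms i \<subseteq> sets (prodX K Ms)"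
  unfolding coord_rectangles_def ignores_coord_def using coord_vimage_in_sets by blast

lemma Int_stable_coord_rectangles: "Int_stable (coord_rectangles K Ms i)"
proof (rule Int_stableI)
  fix a b assume "a \<in> coord_rectangles K Ms i" "b \<in> coord_rectangles K Ms i"
  then obtain A D B E where ab:
    "a = A \<inter> {x \<in> space (prodX K Ms). x i \<in> D}" "ignores_coord K Ms i A" "D \<in> sets (Ms i)"
    "b = B \<inter> {x \<in> space (prodX K Ms). x i \<in> E}" "ignores_coord K Ms i B" "E \<in> sets (Ms i)"
    unfolding coord_rectangles_def by blast
  have "ignores_coord K Ms i (A \<inter> B)" using ab unfolding ignores_coord_def by auto
  moreover have "a \<inter> b = (A \<inter> B) \<inter> {x \<in> space (prodX K Ms). x i \<in> D \<inter> E}" using ab by auto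
  ultimately show "a \<inter> b \<in> coord_rectangles K Ms i" using ab unfolding coord_rectangles_def by blast
qed

lemma sets_prodX_coord_rectangles:
  assumes i: "i < K"
  shows "sets (prodX K Ms) = sigma_sets (space (prodX K Ms)) (coord_rectangles K Ms i)"
proof
  show "sigma_sets (space (prodX K Ms)) (coord_rectangles K Ms i) \<subseteq> sets (prodX K Ms)"
    using coord_rectangles_subset_sets[OF i] by (rule sets.sigma_sets_subset)
next
  have "{{f \<in> \<Pi>\<^sub>E i\<in>{..<K}. space (Ms i). f j \<in> A} | j A. j \<in> {..<K} \<and> A \<in> sets (Ms j)}
      \<subseteq> coord_rectangles K Ms i"
  proof
    fix S assume "S \<in> {{f \<in> \<Pi>\<^sub>E i\<in>{..<K}. space (Ms i). f j \<in> A} | j A. j \<in> {..<K} \<and> A \<in> sets (Ms j)}"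
    then obtain j A where S: "S = {f \<in> space (prodX K Ms). f j \<in> A}" "j < K" "A \<in> sets (Ms j)"
      by (auto simp: space_PiM)
    show "S \<in> coord_rectangles K Ms i"
    proof (cases "j = i")
      case True
      then have "S = space (prodX K Ms) \<inter> {x \<in> space (prodX K Ms). x i \<in> A}" using S by auto
      then show ?thesis using S True ignores_coord_space[OF i] unfolding coord_rectangles_def by blast
    next
      case False
      have "ignores_coord K Ms i S"
        unfolding ignores_coord_def using S False coord_vimage_in_sets[of j K A Ms] fun_upd_in_space_prodX[OF i]
        by auto
      moreover have "S = S \<inter> {x \<in> space (prodX K Ms). x i \<in> space (Ms i)}"
        using S i by (auto simp: space_PiM)
      ultimately show ?thesis unfolding coord_rectangles_def by blast
    qed
  qed
  then show "sets (prodX K Ms) \<subseteq> sigma_sets (space (prodX K Ms)) (coord_rectangles K Ms i)"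
    unfolding sets_PiM_single[of "{..<K}" Ms] space_PiM[symmetric] by (rule sigma_sets_mono')
qed

lemma measure_eqI_coord_rectangles:
  assumes i: "i < K" and N: "N \<in> space (prob_algebra (prodX K Ms))" and N': "N' \<in> space (prob_algebra (prodX K Ms))"
    and eq: "\<And>X. X \<in> coord_rectangles K Ms i \<Longrightarrow> emeasure N X = emeasure N' X"
  shows "N = N'"
proof (rule measure_eqI_generator_eq[OF Int_stable_coord_rectangles, of K Ms i "space (prodX K Ms)"])
  show "coord_rectangles K Ms i \<subseteq> Pow (space (prodX K Ms))"
    using coord_rectangles_subset_sets[OF i] sets.sets_into_space by blast
  show "sets N = sigma_sets (space (prodX K Ms)) (coord_rectangles K Ms i)"
    using sets_in_prob_algebra[OF N] sets_prodX_coord_rectangles[OF i] by simp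
  show "sets N' = sigma_sets (space (prodX K Ms)) (coord_rectangles K Ms i)"
    using sets_in_prob_algebra[OF N'] sets_prodX_coord_rectangles[OF i] by simp
  have "space (prodX K Ms) = space (prodX K Ms) \<inter> {x \<in> space (prodX K Ms). x i \<in> space (Ms i)}"
    using i by (auto simp: space_PiM)
  then show "range (\<lambda>_. space (prodX K Ms)) \<subseteq> coord_rectangles K Ms i"
    using ignores_coord_space[OF i] unfolding coord_rectangles_def by blast
  show "emeasure N (space (prodX K Ms)) \<noteq> \<infinity>"
    using emeasure_eq_measure_in_prob_algebra[OF N] by simp
qed (auto intro: eq)

lemma cond_dist_measurable: "cond_dist K Ms i \<pi> \<kappa> \<Longrightarrow> \<kappa> \<in> prodX K Ms \<rightarrow>\<^sub>M prob_algebra (Ms i)"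
  unfolding cond_dist_def by (elim conjE)

lemma cond_dist_in_space:
  "cond_dist K Ms i \<pi> \<kappa> \<Longrightarrow> x \<in> space (prodX K Ms) \<Longrightarrow> \<kappa> x \<in> space (prob_algebra (Ms i))"
  by (rule measurable_space[OF cond_dist_measurable])

lemma cond_dist_emeasure_measurable:
  "cond_dist K Ms i \<pi> \<kappa> \<Longrightarrow> D \<in> sets (Ms i) \<Longrightarrow> (\<lambda>x. emeasure (\<kappa> x) D) \<in> borel_measurable (prodX K Ms)"
  by (rule measurable_compose[OF measurable_prob_algebraD[OF cond_dist_measurable]
        measurable_emeasure_subprob_algebra])

lemma cond_dist_fun_upd:
  "cond_dist K Ms i \<pi> \<kappa> \<Longrightarrow> x \<in> space (prodX K Ms) \<Longrightarrow> y \<in> space (Ms i) \<Longrightarrow> \<kappa> (x(i := y)) = \<kappa> x"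
  unfolding cond_dist_def by blast

lemma cond_dist_nn_integral:
  "cond_dist K Ms i \<pi> \<kappa> \<Longrightarrow> ignores_coord K Ms i A \<Longrightarrow> D \<in> sets (Ms i) \<Longrightarrow>
    (\<integral>\<^sup>+x. indicator A x * emeasure (\<kappa> x) D \<partial>\<pi>) = emeasure \<pi> (A \<inter> {x \<in> space (prodX K Ms). x i \<in> D})"
  unfolding cond_dist_def ignores_coord_def by blast

lemma cond_distI:
  assumes "\<kappa> \<in> prodX K Ms \<rightarrow>\<^sub>M prob_algebra (Ms i)"
    and "\<And>x y. x \<in> space (prodX K Ms) \<Longrightarrow> y \<in> space (Ms i) \<Longrightarrow> \<kappa> (x(i := y)) = \<kappa> x"
    and "\<And>A D. ignores_coord K Ms i A \<Longrightarrow> D \<in> sets (Ms i) \<Longrightarrow>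
      (\<integral>\<^sup>+x. indicator A x * emeasure (\<kappa> x) D \<partial>\<pi>) = emeasure \<pi> (A \<inter> {x \<in> space (prodX K Ms). x i \<in> D})"
  shows "cond_dist K Ms i \<pi> \<kappa>"
  using assms unfolding cond_dist_def ignores_coord_def by blast

lemma gibbs_step_measurable:
  assumes "i < K" and "\<kappa> \<in> prodX K Ms \<rightarrow>\<^sub>M prob_algebra (Ms i)"
  shows "gibbs_step K Ms \<kappa> i \<in> prodX K Ms \<rightarrow>\<^sub>M prob_algebra (prodX K Ms)"
  unfolding gibbs_step_def[abs_def]
  by (rule measurable_distr_prob_space2[OF assms(2) measurable_fun_upd_pair[OF assms(1)]])

lemma emeasure_gibbs_step:
  assumes i: "i < K" and x: "x \<in> space (prodX K Ms)" and \<kappa>x: "\<kappa> x \<in> space (prob_algebra (Ms i))"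
    and S: "S \<in> sets (prodX K Ms)"
  shows "emeasure (gibbs_step K Ms \<kappa> i x) S = emeasure (\<kappa> x) {y \<in> space (Ms i). x(i := y) \<in> S}"
  unfolding gibbs_step_def
  using emeasure_distr[OF measurable_in_prob_algebra[OF \<kappa>x measurable_fun_upd_coord[OF i x]] S]
    space_in_prob_algebra[OF \<kappa>x]
  by (simp add: vimage_def Int_def conj_commute)

lemma emeasure_gibbs_step_coord_rectangle:
  assumes i: "i < K" and x: "x \<in> space (prodX K Ms)" and \<kappa>x: "\<kappa> x \<in> space (prob_algebra (Ms i))"
    and A: "ignores_coord K Ms i A" and D: "D \<in> sets (Ms i)"
  shows "emeasure (gibbs_step K Ms \<kappa> i x) (A \<inter> {x \<in> space (prodX K Ms). x i \<in> D})
    = indicator A x * emeasure (\<kappa> x) D"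
proof -
  have S: "A \<inter> {x \<in> space (prodX K Ms). x i \<in> D} \<in> sets (prodX K Ms)"
    using A coord_vimage_in_sets[where Ms=Ms, OF i D] unfolding ignores_coord_def by blast
  have "{y \<in> space (Ms i). x(i := y) \<in> A \<inter> {x \<in> space (prodX K Ms). x i \<in> D}} = (if x \<in> A then D else {})"
    using A x sets.sets_into_space[OF D] fun_upd_in_space_prodX[OF i x] unfolding ignores_coord_def by auto
  then show ?thesis
    using emeasure_gibbs_step[where \<kappa>=\<kappa>, OF i x \<kappa>x S] by (simp add: indicator_def)
qed

lemma emeasure_bind_gibbs_step_coord_rectangle:
  assumes i: "i < K" and \<nu>: "\<nu> \<in> space (prob_algebra (prodX K Ms))" and \<kappa>: "cond_dist K Ms i \<pi> \<kappa>"
    and A: "ignores_coord K Ms i A" and D: "D \<in> sets (Ms i)"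
  shows "emeasure (bind \<nu> (gibbs_step K Ms \<kappa> i)) (A \<inter> {x \<in> space (prodX K Ms). x i \<in> D})
    = (\<integral>\<^sup>+x. indicator A x * emeasure (\<kappa> x) D \<partial>\<nu>)"
proof -
  have "A \<inter> {x \<in> space (prodX K Ms). x i \<in> D} \<in> sets (prodX K Ms)"
    using A coord_vimage_in_sets[where Ms=Ms, OF i D] unfolding ignores_coord_def by blast
  then have "emeasure (bind \<nu> (gibbs_step K Ms \<kappa> i)) (A \<inter> {x \<in> space (prodX K Ms). x i \<in> D})
      = (\<integral>\<^sup>+x. emeasure (gibbs_step K Ms \<kappa> i x) (A \<inter> {x \<in> space (prodX K Ms). x i \<in> D}) \<partial>\<nu>)"
    by (rule emeasure_bind_prob_algebra[OF \<nu> gibbs_step_measurable[OF i cond_dist_measurable[OF \<kappa>]]])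
  also have "\<dots> = (\<integral>\<^sup>+x. indicator A x * emeasure (\<kappa> x) D \<partial>\<nu>)"
  proof (rule nn_integral_cong)
    fix x assume "x \<in> space \<nu>"
    then have x: "x \<in> space (prodX K Ms)" using space_in_prob_algebra[OF \<nu>] by simp
    show "emeasure (gibbs_step K Ms \<kappa> i x) (A \<inter> {x \<in> space (prodX K Ms). x i \<in> D})
        = indicator A x * emeasure (\<kappa> x) D"
      by (rule emeasure_gibbs_step_coord_rectangle[where \<kappa>=\<kappa>, OF i x cond_dist_in_space[OF \<kappa> x] A D])
  qed
  finally show ?thesis .
qed

lemma bind_gibbs_step_invariant:
  assumes i: "i < K" and \<pi>: "\<pi> \<in> space (prob_algebra (prodX K Ms))" and \<kappa>: "cond_dist K Ms i \<pi> \<kappa>"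
  shows "bind \<pi> (gibbs_step K Ms \<kappa> i) = \<pi>"
proof (rule measure_eqI_coord_rectangles[OF i _ \<pi>])
  show "bind \<pi> (gibbs_step K Ms \<kappa> i) \<in> space (prob_algebra (prodX K Ms))"
    by (rule bind_in_space_prob_algebra[OF \<pi> gibbs_step_measurable[OF i cond_dist_measurable[OF \<kappa>]]])
  fix X assume "X \<in> coord_rectangles K Ms i"
  then obtain A D where X: "X = A \<inter> {x \<in> space (prodX K Ms). x i \<in> D}"
    and A: "ignores_coord K Ms i A" and D: "D \<in> sets (Ms i)"
    unfolding coord_rectangles_def by blast
  show "emeasure (bind \<pi> (gibbs_step K Ms \<kappa> i)) X = emeasure \<pi> X"
    unfolding X emeasure_bind_gibbs_step_coord_rectangle[OF i \<pi> \<kappa> A D]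
    by (rule cond_dist_nn_integral[OF \<kappa> A D])
qed

lemma AE_not_less_if_nn_integral_eq_on_less:
  assumes f: "f \<in> borel_measurable M" and g: "g \<in> borel_measurable M"
    and A: "A = {x\<in>space M. f x < g x}"
    and eq: "(\<integral>\<^sup>+x. indicator A x * f x \<partial>M) = (\<integral>\<^sup>+x. indicator A x * g x \<partial>M)"
    and fin: "(\<integral>\<^sup>+x. indicator A x * f x \<partial>M) \<noteq> \<infinity>"
  shows "AE x in M. \<not> f x < g x"
proof -
  note [measurable] = f g
  have Am: "A \<in> sets M" unfolding A by measurable
  define h where "h x = indicator A x * (g x - f x)" for x
  have hm: "h \<in> borel_measurable M" unfolding h_def using Am by measurable
  have "(\<integral>\<^sup>+x. indicator A x * g x \<partial>M) = (\<integral>\<^sup>+x. indicator A x * f x + h x \<partial>M)"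
    unfolding h_def A
    by (intro nn_integral_cong) (auto simp: indicator_def add_diff_self_ennreal less_imp_le)
  also have "\<dots> = (\<integral>\<^sup>+x. indicator A x * f x \<partial>M) + (\<integral>\<^sup>+x. h x \<partial>M)"
    by (rule nn_integral_add) (use Am hm in auto)
  finally have "(\<integral>\<^sup>+x. h x \<partial>M) = 0"
    using eq fin ennreal_add_left_cancel[of "\<integral>\<^sup>+x. indicator A x * f x \<partial>M" "\<integral>\<^sup>+x. h x \<partial>M" 0] by simp
  then have "AE x in M. h x = 0" using nn_integral_0_iff_AE[OF hm] by simp
  then show ?thesis
  proof (rule AE_mp[OF _ AE_I2[OF impI]])
    fix x assume "x \<in> space M" and "h x = 0"
    then show "\<not> f x < g x"
      unfolding h_def A using diff_gr0_ennreal[of "f x" "g x"] by (auto simp: indicator_def)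
  qed
qed

lemma cond_dist_AE_not_less:
  assumes i: "i < K" and \<pi>: "\<pi> \<in> space (prob_algebra (prodX K Ms))"
    and \<kappa>: "cond_dist K Ms i \<pi> \<kappa>" and \<kappa>': "cond_dist K Ms i \<pi> \<kappa>'" and D: "D \<in> sets (Ms i)"
  shows "AE x in \<pi>. \<not> emeasure (\<kappa> x) D < emeasure (\<kappa>' x) D"
proof -
  have f: "(\<lambda>x. emeasure (\<kappa> x) D) \<in> borel_measurable \<pi>"
    by (rule measurable_in_prob_algebra[OF \<pi> cond_dist_emeasure_measurable[OF \<kappa> D]])
  have g: "(\<lambda>x. emeasure (\<kappa>' x) D) \<in> borel_measurable \<pi>"
    by (rule measurable_in_prob_algebra[OF \<pi> cond_dist_emeasure_measurable[OF \<kappa>' D]])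
  define A where "A = {x\<in>space \<pi>. emeasure (\<kappa> x) D < emeasure (\<kappa>' x) D}"
  have "A \<in> sets \<pi>" unfolding A_def using f g by measurable
  then have A: "ignores_coord K Ms i A"
    unfolding ignores_coord_def
  proof (intro conjI ballI)
    show "A \<in> sets (prodX K Ms)" using \<open>A \<in> sets \<pi>\<close> sets_in_prob_algebra[OF \<pi>] by simp
    fix x y assume x: "x \<in> space (prodX K Ms)" and y: "y \<in> space (Ms i)"
    show "x \<in> A \<longleftrightarrow> x(i := y) \<in> A"
      unfolding A_def space_in_prob_algebra[OF \<pi>]
      using x fun_upd_in_space_prodX[OF i x y] cond_dist_fun_upd[OF \<kappa> x y] cond_dist_fun_upd[OF \<kappa>' x y]
      by simp
  qed
  show ?thesis
  proof (rule AE_not_less_if_nn_integral_eq_on_less[OF f g A_def])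
    show "(\<integral>\<^sup>+x. indicator A x * emeasure (\<kappa> x) D \<partial>\<pi>) = (\<integral>\<^sup>+x. indicator A x * emeasure (\<kappa>' x) D \<partial>\<pi>)"
      unfolding cond_dist_nn_integral[OF \<kappa> A D] cond_dist_nn_integral[OF \<kappa>' A D] ..
    show "(\<integral>\<^sup>+x. indicator A x * emeasure (\<kappa> x) D \<partial>\<pi>) \<noteq> \<infinity>"
      unfolding cond_dist_nn_integral[OF \<kappa> A D]
      using finite_measure.emeasure_finite[OF finite_measure_in_prob_algebra[OF \<pi>]] by simp
  qed
qed

lemma cond_dist_AE_eq:
  assumes i: "i < K" and \<pi>: "\<pi> \<in> space (prob_algebra (prodX K Ms))"
    and \<kappa>: "cond_dist K Ms i \<pi> \<kappa>" and \<kappa>': "cond_dist K Ms i \<pi> \<kappa>'" and D: "D \<in> sets (Ms i)"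
  shows "AE x in \<pi>. emeasure (\<kappa> x) D = emeasure (\<kappa>' x) D"
  using cond_dist_AE_not_less[OF i \<pi> \<kappa> \<kappa>' D] cond_dist_AE_not_less[OF i \<pi> \<kappa>' \<kappa> D]
  by eventually_elim (simp add: not_less antisym)

text \<open>Conditional distributions are unique only \<pi>-almost everywhere, so two Gibbs updates
  built from different versions agree only on laws absolutely continuous w.r.t. \<pi>.\<close>
lemma bind_gibbs_step_cond_dist_cong:
  assumes i: "i < K" and \<pi>: "\<pi> \<in> space (prob_algebra (prodX K Ms))"
    and \<kappa>: "cond_dist K Ms i \<pi> \<kappa>" and \<kappa>': "cond_dist K Ms i \<pi> \<kappa>'"
    and \<nu>: "\<nu> \<in> space (prob_algebra (prodX K Ms))" and ac: "absolutely_continuous \<pi> \<nu>"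
  shows "bind \<nu> (gibbs_step K Ms \<kappa> i) = bind \<nu> (gibbs_step K Ms \<kappa>' i)"
proof (rule measure_eqI_coord_rectangles[OF i])
  show "bind \<nu> (gibbs_step K Ms \<kappa> i) \<in> space (prob_algebra (prodX K Ms))"
    by (rule bind_in_space_prob_algebra[OF \<nu> gibbs_step_measurable[OF i cond_dist_measurable[OF \<kappa>]]])
  show "bind \<nu> (gibbs_step K Ms \<kappa>' i) \<in> space (prob_algebra (prodX K Ms))"
    by (rule bind_in_space_prob_algebra[OF \<nu> gibbs_step_measurable[OF i cond_dist_measurable[OF \<kappa>']]])
  fix X assume "X \<in> coord_rectangles K Ms i"
  then obtain A D where X: "X = A \<inter> {x \<in> space (prodX K Ms). x i \<in> D}"
    and A: "ignores_coord K Ms i A" and D: "D \<in> sets (Ms i)"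
    unfolding coord_rectangles_def by blast
  have "AE x in \<nu>. emeasure (\<kappa> x) D = emeasure (\<kappa>' x) D"
    by (rule absolutely_continuous_AE[OF sets_in_prob_algebra[OF \<nu>, folded sets_in_prob_algebra[OF \<pi>]] ac
          cond_dist_AE_eq[OF i \<pi> \<kappa> \<kappa>' D]])
  then have "AE x in \<nu>. indicator A x * emeasure (\<kappa> x) D = indicator A x * emeasure (\<kappa>' x) D"
    by eventually_elim simp
  then show "emeasure (bind \<nu> (gibbs_step K Ms \<kappa> i)) X = emeasure (bind \<nu> (gibbs_step K Ms \<kappa>' i)) X"
    unfolding X emeasure_bind_gibbs_step_coord_rectangle[OF i \<nu> \<kappa> A D]
      emeasure_bind_gibbs_step_coord_rectangle[OF i \<nu> \<kappa>' A D]
    by (rule nn_integral_cong_AE)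
qed

section \<open>Coordinatewise embeddings\<close>

lemma measurable_coordmap:
  assumes "\<And>j. j < K \<Longrightarrow> f j \<in> Ms j \<rightarrow>\<^sub>M Ms j"
  shows "coordmap K f \<in> prodX K Ms \<rightarrow>\<^sub>M prodX K Ms"
proof -
  have "(\<lambda>x. \<lambda>j\<in>{..<K}. f j (x j)) \<in> prodX K Ms \<rightarrow>\<^sub>M prodX K Ms"
  proof (rule measurable_restrict)
    fix j assume "j \<in> {..<K}"
    then show "(\<lambda>x. f j (x j)) \<in> prodX K Ms \<rightarrow>\<^sub>M Ms j"
      by (intro measurable_compose[OF measurable_component_singleton[of j "{..<K}" Ms] assms]) auto
  qed
  then show ?thesis by (simp add: coordmap_def[abs_def])
qed

locale coordwise_embedding =
  fixes K :: nat and Ms :: "nat \<Rightarrow> 'a measure" and \<phi> :: "nat \<Rightarrow> 'a \<Rightarrow> 'a"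
  assumes coord_measurable: "\<And>j. j < K \<Longrightarrow> \<phi> j \<in> Ms j \<rightarrow>\<^sub>M Ms j"
    and coord_inj: "\<And>j. j < K \<Longrightarrow> inj_on (\<phi> j) (space (Ms j))"
    and coord_image: "\<And>j A. j < K \<Longrightarrow> A \<in> sets (Ms j) \<Longrightarrow> \<phi> j ` A \<in> sets (Ms j)"
begin

text \<open>A measurable left inverse of \<phi> j; off the range of \<phi> j its value is irrelevant.\<close>
definition \<psi> :: "nat \<Rightarrow> 'a \<Rightarrow> 'a" where
  "\<psi> j z = (if z \<in> \<phi> j ` space (Ms j) then the_inv_into (space (Ms j)) (\<phi> j) z else z)"

abbreviation \<Phi> :: "(nat \<Rightarrow> 'a) \<Rightarrow> nat \<Rightarrow> 'a" where "\<Phi> \<equiv> coordmap K \<phi>"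
abbreviation \<Psi> :: "(nat \<Rightarrow> 'a) \<Rightarrow> nat \<Rightarrow> 'a" where "\<Psi> \<equiv> coordmap K \<psi>"

lemma coord_in_space: "j < K \<Longrightarrow> w \<in> space (Ms j) \<Longrightarrow> \<phi> j w \<in> space (Ms j)"
  using measurable_space[OF coord_measurable] by blast

lemma \<psi>_\<phi>: "j < K \<Longrightarrow> w \<in> space (Ms j) \<Longrightarrow> \<psi> j (\<phi> j w) = w"
  unfolding \<psi>_def using the_inv_into_f_f[OF coord_inj] by auto

lemma \<psi>_in_space: "j < K \<Longrightarrow> z \<in> space (Ms j) \<Longrightarrow> \<psi> j z \<in> space (Ms j)"
  unfolding \<psi>_def using the_inv_into_into[OF coord_inj _ order_refl] by auto

lemma \<psi>_measurable:
  assumes j: "j < K"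
  shows "\<psi> j \<in> Ms j \<rightarrow>\<^sub>M Ms j"
proof (rule measurableI)
  show "\<psi> j z \<in> space (Ms j)" if "z \<in> space (Ms j)" for z by (rule \<psi>_in_space[OF j that])
next
  fix E assume E: "E \<in> sets (Ms j)"
  have "\<psi> j -` E \<inter> space (Ms j) = \<phi> j ` E \<union> (E - \<phi> j ` space (Ms j))"
    using sets.sets_into_space[OF E] the_inv_into_f_f[OF coord_inj[OF j]] coord_in_space[OF j]
    by (auto simp: \<psi>_def split: if_splits)
  also have "\<dots> \<in> sets (Ms j)"
    using coord_image[OF j E] coord_image[OF j sets.top] E by auto
  finally show "\<psi> j -` E \<inter> space (Ms j) \<in> sets (Ms j)" .
qed

lemma \<Phi>_measurable: "\<Phi> \<in> prodX K Ms \<rightarrow>\<^sub>M prodX K Ms"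
  by (rule measurable_coordmap[OF coord_measurable])

lemma \<Psi>_measurable: "\<Psi> \<in> prodX K Ms \<rightarrow>\<^sub>M prodX K Ms"
  by (rule measurable_coordmap[OF \<psi>_measurable])

lemma \<Psi>_\<Phi>: "x \<in> space (prodX K Ms) \<Longrightarrow> \<Psi> (\<Phi> x) = x"
  by (rule ext) (auto simp: coordmap_def space_PiM PiE_iff extensional_def \<psi>_\<phi>)

lemma \<phi>_\<psi>: "j < K \<Longrightarrow> z \<in> \<phi> j ` space (Ms j) \<Longrightarrow> \<phi> j (\<psi> j z) = z"
  using \<psi>_\<phi> by auto

lemma \<Phi>_\<Psi>:
  "x \<in> space (prodX K Ms) \<Longrightarrow> (\<And>j. j < K \<Longrightarrow> x j \<in> \<phi> j ` space (Ms j)) \<Longrightarrow> \<Phi> (\<Psi> x) = x"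
  by (rule ext) (auto simp: coordmap_def space_PiM PiE_iff extensional_def \<phi>_\<psi>)

lemma \<Phi>_fun_upd: "i < K \<Longrightarrow> \<Phi> (x(i := y)) = (\<Phi> x)(i := \<phi> i y)"
  by (rule ext) (auto simp: coordmap_def)

lemma \<Psi>_fun_upd: "i < K \<Longrightarrow> \<Psi> (x(i := y)) = (\<Psi> x)(i := \<psi> i y)"
  by (rule ext) (auto simp: coordmap_def)

lemma \<Phi>_image_in_sets: "\<Phi> ` space (prodX K Ms) \<in> sets (prodX K Ms)"
proof -
  let ?N = "\<Union>j<K. {x \<in> space (prodX K Ms). x j \<in> space (Ms j) - \<phi> j ` space (Ms j)}"
  have "\<Phi> ` space (prodX K Ms) = space (prodX K Ms) - ?N"
  proof (intro equalityI subsetI)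
    fix z assume "z \<in> \<Phi> ` space (prodX K Ms)"
    then show "z \<in> space (prodX K Ms) - ?N"
      using coord_in_space by (auto simp: coordmap_def space_PiM PiE_iff)
  next
    fix z assume z: "z \<in> space (prodX K Ms) - ?N"
    then have "z j \<in> \<phi> j ` space (Ms j)" if "j < K" for j
      using that by (auto simp: space_PiM PiE_iff)
    then have "\<Phi> (\<Psi> z) = z" using z by (intro \<Phi>_\<Psi>) auto
    moreover have "\<Psi> z \<in> space (prodX K Ms)" using measurable_space[OF \<Psi>_measurable] z by blast
    ultimately show "z \<in> \<Phi> ` space (prodX K Ms)" by (metis image_eqI)
  qed
  also have "\<dots> \<in> sets (prodX K Ms)"
    using coord_vimage_in_sets[OF _ sets.Diff[OF sets.top coord_image[OF _ sets.top]]] by auto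
  finally show ?thesis .
qed

definition cond_push :: "((nat \<Rightarrow> 'a) \<Rightarrow> 'a measure) \<Rightarrow> nat \<Rightarrow> (nat \<Rightarrow> 'a) \<Rightarrow> 'a measure" where
  "cond_push \<kappa> i x = distr (\<kappa> (\<Psi> x)) (Ms i) (\<phi> i)"

lemma cond_push_measurable:
  assumes i: "i < K" and \<kappa>: "\<kappa> \<in> prodX K Ms \<rightarrow>\<^sub>M prob_algebra (Ms i)"
  shows "cond_push \<kappa> i \<in> prodX K Ms \<rightarrow>\<^sub>M prob_algebra (Ms i)"
proof -
  have "(\<lambda>(x, y). \<phi> i y) \<in> prodX K Ms \<Otimes>\<^sub>M Ms i \<rightarrow>\<^sub>M Ms i"
    using measurable_compose[OF measurable_snd coord_measurable[OF i]] by (simp add: case_prod_beta')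
  then show ?thesis
    unfolding cond_push_def[abs_def]
    using measurable_distr_prob_space2[OF measurable_comp[OF \<Psi>_measurable \<kappa>]] by (simp add: o_def)
qed

lemma emeasure_cond_push:
  assumes i: "i < K" and \<kappa>x: "\<kappa> (\<Psi> x) \<in> space (prob_algebra (Ms i))" and D: "D \<in> sets (Ms i)"
  shows "emeasure (cond_push \<kappa> i x) D = emeasure (\<kappa> (\<Psi> x)) (\<phi> i -` D \<inter> space (Ms i))"
  unfolding cond_push_def
  using emeasure_distr[OF measurable_in_prob_algebra[OF \<kappa>x coord_measurable[OF i]] D]
    space_in_prob_algebra[OF \<kappa>x]
  by simp

lemma tv_dist_distr_\<Phi>:
  "a \<in> space (prob_algebra (prodX K Ms)) \<Longrightarrow> b \<in> space (prob_algebra (prodX K Ms)) \<Longrightarrow>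
    tv_dist (prodX K Ms) (distr a (prodX K Ms) \<Phi>) (distr b (prodX K Ms) \<Phi>) = tv_dist (prodX K Ms) a b"
  by (rule tv_dist_distr_left_inverse[OF \<Phi>_measurable \<Psi>_measurable]) (auto simp: \<Psi>_\<Phi>)

lemma distr_\<Phi>_nbhd_image:
  "\<pi> \<in> space (prob_algebra (prodX K Ms)) \<Longrightarrow> 0 \<le> M \<Longrightarrow>
    (\<lambda>\<mu>. distr \<mu> (prodX K Ms) \<Phi>) ` nbhd (prodX K Ms) \<pi> M = nbhd (prodX K Ms) (distr \<pi> (prodX K Ms) \<Phi>) M"
  by (rule distr_nbhd_image[OF \<Phi>_measurable \<Psi>_measurable _ \<Phi>_image_in_sets]) (auto simp: \<Psi>_\<Phi>)

lemma ignores_coord_vimage_\<Phi>: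
  assumes i: "i < K" and A: "ignores_coord K Ms i A"
  shows "ignores_coord K Ms i (\<Phi> -` A \<inter> space (prodX K Ms))"
  unfolding ignores_coord_def
proof (intro conjI ballI)
  show "\<Phi> -` A \<inter> space (prodX K Ms) \<in> sets (prodX K Ms)"
    using A measurable_sets[OF \<Phi>_measurable] unfolding ignores_coord_def by blast
  fix x y assume x: "x \<in> space (prodX K Ms)" and y: "y \<in> space (Ms i)"
  show "x \<in> \<Phi> -` A \<inter> space (prodX K Ms) \<longleftrightarrow> x(i := y) \<in> \<Phi> -` A \<inter> space (prodX K Ms)"
    using A measurable_space[OF \<Phi>_measurable x] coord_in_space[OF i y] fun_upd_in_space_prodX[OF i x y] x
    unfolding ignores_coord_def by (auto simp: \<Phi>_fun_upd[OF i])
qed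

lemma cond_dist_cond_push:
  assumes i: "i < K" and \<pi>: "\<pi> \<in> space (prob_algebra (prodX K Ms))" and \<kappa>: "cond_dist K Ms i \<pi> \<kappa>"
  shows "cond_dist K Ms i (distr \<pi> (prodX K Ms) \<Phi>) (cond_push \<kappa> i)"
proof (rule cond_distI)
  show \<kappa>\<Phi>: "cond_push \<kappa> i \<in> prodX K Ms \<rightarrow>\<^sub>M prob_algebra (Ms i)"
    by (rule cond_push_measurable[OF i cond_dist_measurable[OF \<kappa>]])
  show "cond_push \<kappa> i (x(i := y)) = cond_push \<kappa> i x" if "x \<in> space (prodX K Ms)" "y \<in> space (Ms i)" for x y
    unfolding cond_push_def \<Psi>_fun_upd[OF i]
    using cond_dist_fun_upd[OF \<kappa> measurable_space[OF \<Psi>_measurable that(1)] \<psi>_in_space[OF i that(2)]] by simp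
  fix A D assume A: "ignores_coord K Ms i A" and D: "D \<in> sets (Ms i)"
  let ?A' = "\<Phi> -` A \<inter> space (prodX K Ms)" and ?D' = "\<phi> i -` D \<inter> space (Ms i)"
  have \<Phi>\<pi>: "\<Phi> \<in> \<pi> \<rightarrow>\<^sub>M prodX K Ms" by (rule measurable_in_prob_algebra[OF \<pi> \<Phi>_measurable])
  have AD: "A \<inter> {x \<in> space (prodX K Ms). x i \<in> D} \<in> sets (prodX K Ms)"
    using A coord_vimage_in_sets[where Ms=Ms, OF i D] unfolding ignores_coord_def by blast
  have "(\<integral>\<^sup>+x. indicator A x * emeasure (cond_push \<kappa> i x) D \<partial>distr \<pi> (prodX K Ms) \<Phi>)
      = (\<integral>\<^sup>+x. indicator A (\<Phi> x) * emeasure (cond_push \<kappa> i (\<Phi> x)) D \<partial>\<pi>)"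
    by (rule nn_integral_distr[OF \<Phi>\<pi>])
      (use A measurable_compose[OF measurable_prob_algebraD[OF \<kappa>\<Phi>] measurable_emeasure_subprob_algebra[OF D]]
       in \<open>auto simp: ignores_coord_def\<close>)
  also have "\<dots> = (\<integral>\<^sup>+x. indicator ?A' x * emeasure (\<kappa> x) ?D' \<partial>\<pi>)"
  proof (rule nn_integral_cong)
    fix x assume "x \<in> space \<pi>"
    then have x: "x \<in> space (prodX K Ms)" using space_in_prob_algebra[OF \<pi>] by simp
    show "indicator A (\<Phi> x) * emeasure (cond_push \<kappa> i (\<Phi> x)) D = indicator ?A' x * emeasure (\<kappa> x) ?D'"
      using emeasure_cond_push[OF i _ D, of \<kappa> "\<Phi> x"] \<Psi>_\<Phi>[OF x] cond_dist_in_space[OF \<kappa> x] x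
      by (simp add: indicator_def)
  qed
  also have "\<dots> = emeasure \<pi> (?A' \<inter> {x \<in> space (prodX K Ms). x i \<in> ?D'})"
    by (rule cond_dist_nn_integral[OF \<kappa> ignores_coord_vimage_\<Phi>[OF i A] measurable_sets[OF coord_measurable[OF i] D]])
  also have "?A' \<inter> {x \<in> space (prodX K Ms). x i \<in> ?D'} = \<Phi> -` (A \<inter> {x \<in> space (prodX K Ms). x i \<in> D}) \<inter> space \<pi>"
    unfolding space_in_prob_algebra[OF \<pi>] using measurable_space[OF \<Phi>_measurable] i
    by (auto simp: coordmap_def space_PiM PiE_iff)
  also have "emeasure \<pi> \<dots> = emeasure (distr \<pi> (prodX K Ms) \<Phi>) (A \<inter> {x \<in> space (prodX K Ms). x i \<in> D})"
    by (rule emeasure_distr[OF \<Phi>\<pi> AD, symmetric])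
  finally show "(\<integral>\<^sup>+x. indicator A x * emeasure (cond_push \<kappa> i x) D \<partial>distr \<pi> (prodX K Ms) \<Phi>)
      = emeasure (distr \<pi> (prodX K Ms) \<Phi>) (A \<inter> {x \<in> space (prodX K Ms). x i \<in> D})" .
qed

lemma distr_gibbs_step:
  assumes i: "i < K" and \<kappa>: "\<kappa> \<in> prodX K Ms \<rightarrow>\<^sub>M prob_algebra (Ms i)" and x: "x \<in> space (prodX K Ms)"
  shows "distr (gibbs_step K Ms \<kappa> i x) (prodX K Ms) \<Phi> = gibbs_step K Ms (cond_push \<kappa> i) i (\<Phi> x)"
proof -
  have \<kappa>x: "\<kappa> x \<in> space (prob_algebra (Ms i))" by (rule measurable_space[OF \<kappa> x])
  have "distr (gibbs_step K Ms \<kappa> i x) (prodX K Ms) \<Phi> = distr (\<kappa> x) (prodX K Ms) (\<Phi> \<circ> (\<lambda>y. x(i := y)))"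
    unfolding gibbs_step_def
    by (rule distr_distr[OF \<Phi>_measurable measurable_in_prob_algebra[OF \<kappa>x measurable_fun_upd_coord[OF i x]]])
  also have "\<dots> = distr (\<kappa> x) (prodX K Ms) ((\<lambda>y. (\<Phi> x)(i := y)) \<circ> \<phi> i)"
    by (rule distr_cong) (auto simp: \<Phi>_fun_upd[OF i])
  also have "\<dots> = distr (distr (\<kappa> x) (Ms i) (\<phi> i)) (prodX K Ms) (\<lambda>y. (\<Phi> x)(i := y))"
    by (rule distr_distr[symmetric, OF measurable_fun_upd_coord[OF i measurable_space[OF \<Phi>_measurable x]]
          measurable_in_prob_algebra[OF \<kappa>x coord_measurable[OF i]]])
  also have "\<dots> = gibbs_step K Ms (cond_push \<kappa> i) i (\<Phi> x)"
    unfolding gibbs_step_def cond_push_def \<Psi>_\<Phi>[OF x] ..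
  finally show ?thesis .
qed

lemma distr_bind_gibbs_step:
  assumes i: "i < K" and \<kappa>: "\<kappa> \<in> prodX K Ms \<rightarrow>\<^sub>M prob_algebra (Ms i)"
    and \<nu>: "\<nu> \<in> space (prob_algebra (prodX K Ms))"
  shows "distr (bind \<nu> (gibbs_step K Ms \<kappa> i)) (prodX K Ms) \<Phi>
    = bind (distr \<nu> (prodX K Ms) \<Phi>) (gibbs_step K Ms (cond_push \<kappa> i) i)"
proof -
  have ne: "space \<nu> \<noteq> {}" using \<nu> prob_space.not_empty by (auto simp: space_prob_algebra)
  have "distr (bind \<nu> (gibbs_step K Ms \<kappa> i)) (prodX K Ms) \<Phi>
      = bind \<nu> (\<lambda>x. distr (gibbs_step K Ms \<kappa> i x) (prodX K Ms) \<Phi>)"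
    by (rule distr_bind[OF measurable_prob_algebraD ne \<Phi>_measurable])
      (rule measurable_in_prob_algebra[OF \<nu> gibbs_step_measurable[OF i \<kappa>]])
  also have "\<dots> = bind \<nu> (\<lambda>x. gibbs_step K Ms (cond_push \<kappa> i) i (\<Phi> x))"
    by (rule bind_cong[OF refl]) (use distr_gibbs_step[OF i \<kappa>] space_in_prob_algebra[OF \<nu>] in auto)
  also have "\<dots> = bind (distr \<nu> (prodX K Ms) \<Phi>) (gibbs_step K Ms (cond_push \<kappa> i) i)"
    by (rule bind_distr[symmetric, OF measurable_in_prob_algebra[OF \<nu> \<Phi>_measurable] _ ne])
      (rule measurable_prob_algebraD[OF gibbs_step_measurable[OF i cond_push_measurable[OF i \<kappa>]]])
  finally show ?thesis .
qed

lemma distr_bind_gibbs_step_cond_dist: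
  assumes i: "i < K" and \<pi>: "\<pi> \<in> space (prob_algebra (prodX K Ms))"
    and \<kappa>: "cond_dist K Ms i \<pi> \<kappa>" and \<kappa>': "cond_dist K Ms i (distr \<pi> (prodX K Ms) \<Phi>) \<kappa>'"
    and \<nu>: "\<nu> \<in> nbhd (prodX K Ms) \<pi> M" and M: "0 \<le> M"
  shows "distr (bind \<nu> (gibbs_step K Ms \<kappa> i)) (prodX K Ms) \<Phi> = bind (distr \<nu> (prodX K Ms) \<Phi>) (gibbs_step K Ms \<kappa>' i)"
proof -
  have \<nu>X: "\<nu> \<in> space (prob_algebra (prodX K Ms))" using \<nu> by (simp add: nbhd_def)
  have \<pi>\<Phi>: "distr \<pi> (prodX K Ms) \<Phi> \<in> space (prob_algebra (prodX K Ms))"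
    by (rule distr_in_space_prob_algebra[OF \<pi> \<Phi>_measurable])
  show ?thesis
    unfolding distr_bind_gibbs_step[OF i cond_dist_measurable[OF \<kappa>] \<nu>X]
    by (rule bind_gibbs_step_cond_dist_cong[OF i \<pi>\<Phi> cond_dist_cond_push[OF i \<pi> \<kappa>] \<kappa>'
          distr_in_space_prob_algebra[OF \<nu>X \<Phi>_measurable]
          nbhd_absolutely_continuous[OF nbhd_distr[OF \<Phi>_measurable \<pi> \<nu>] \<pi>\<Phi> M]])
qed

lemma iter_gibbs_kernel_distr:
  assumes \<pi>: "\<pi> \<in> space (prob_algebra (prodX K Ms))"
    and \<kappa>: "\<And>i. i < K \<Longrightarrow> cond_dist K Ms i \<pi> (\<kappa> i)"
    and \<kappa>': "\<And>i. i < K \<Longrightarrow> cond_dist K Ms i (distr \<pi> (prodX K Ms) \<Phi>) (\<kappa>' i)"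
    and M: "0 \<le> M" and \<mu>: "\<mu> \<in> nbhd (prodX K Ms) \<pi> M"
  shows "iter_kernel \<mu> (gibbs_kernel K Ms \<kappa>) t \<in> nbhd (prodX K Ms) \<pi> M \<and>
    distr (iter_kernel \<mu> (gibbs_kernel K Ms \<kappa>) t) (prodX K Ms) \<Phi>
      = iter_kernel (distr \<mu> (prodX K Ms) \<Phi>) (gibbs_kernel K Ms \<kappa>') t"
proof -
  have "bind \<nu> (gibbs_kernel K Ms \<kappa>) \<in> nbhd (prodX K Ms) \<pi> M \<and>
    distr (bind \<nu> (gibbs_kernel K Ms \<kappa>)) (prodX K Ms) \<Phi>
      = bind (distr \<nu> (prodX K Ms) \<Phi>) (gibbs_kernel K Ms \<kappa>')"
    if \<nu>: "\<nu> \<in> nbhd (prodX K Ms) \<pi> M" for \<nu>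
    unfolding gibbs_kernel_def
  proof (rule scan_kernel_intertwine[where f=\<Phi>, OF _ _ _ _ _ \<nu>])
    fix i assume i: "i < K"
    show "gibbs_step K Ms (\<kappa> i) i \<in> prodX K Ms \<rightarrow>\<^sub>M prob_algebra (prodX K Ms)"
      by (rule gibbs_step_measurable[OF i cond_dist_measurable[OF \<kappa>[OF i]]])
    show "gibbs_step K Ms (\<kappa>' i) i \<in> prodX K Ms \<rightarrow>\<^sub>M prob_algebra (prodX K Ms)"
      by (rule gibbs_step_measurable[OF i cond_dist_measurable[OF \<kappa>'[OF i]]])
    fix \<nu>' assume \<nu>': "\<nu>' \<in> nbhd (prodX K Ms) \<pi> M"
    show "bind \<nu>' (gibbs_step K Ms (\<kappa> i) i) \<in> nbhd (prodX K Ms) \<pi> M"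
      by (rule nbhd_bind_invariant[OF gibbs_step_measurable[OF i cond_dist_measurable[OF \<kappa>[OF i]]] \<pi>
            bind_gibbs_step_invariant[OF i \<pi> \<kappa>[OF i]] \<nu>' M])
    show "distr (bind \<nu>' (gibbs_step K Ms (\<kappa> i) i)) (prodX K Ms) \<Phi>
        = bind (distr \<nu>' (prodX K Ms) \<Phi>) (gibbs_step K Ms (\<kappa>' i) i)"
      by (rule distr_bind_gibbs_step_cond_dist[OF i \<pi> \<kappa>[OF i] \<kappa>'[OF i] \<nu>' M])
  qed (auto simp: nbhd_def)
  then show ?thesis by (intro iter_kernel_intertwine[OF _ _ \<mu>]) auto
qed

end

theorem lemma2p1:
  fixes K :: nat
    and Ms :: "nat \<Rightarrow> 'a measure"
    and Q :: "nat \<Rightarrow> 'y measure"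
    and \<pi> :: "nat \<Rightarrow> 'y \<Rightarrow> (nat \<Rightarrow> 'a) measure"
    and \<pi>lim :: "(nat \<Rightarrow> 'a) measure"
    and \<phi> :: "nat \<Rightarrow> 'y \<Rightarrow> nat \<Rightarrow> 'a \<Rightarrow> 'a"
    and n :: nat and y :: 'y
    and \<kappa> \<kappa>t :: "nat \<Rightarrow> (nat \<Rightarrow> 'a) \<Rightarrow> 'a measure"
    and t :: nat and M :: real
  assumes Q: "\<And>m. prob_space (Q m)"
    and \<pi>_prob: "\<And>m z. z \<in> space (Q m) \<Longrightarrow> \<pi> m z \<in> space (prob_algebra (prodX K Ms))"
    and \<pi>lim: "\<pi>lim \<in> space (prob_algebra (prodX K Ms))"
    and \<phi>_meas: "\<And>m z j. z \<in> space (Q m) \<Longrightarrow> j < K \<Longrightarrow> \<phi> m z j \<in> Ms j \<rightarrow>\<^sub>M Ms j"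
    and \<phi>_inj: "\<And>m z j. z \<in> space (Q m) \<Longrightarrow> j < K \<Longrightarrow> inj_on (\<phi> m z j) (space (Ms j))"
    and \<phi>_img: "\<And>m z j A. z \<in> space (Q m) \<Longrightarrow> j < K \<Longrightarrow> A \<in> sets (Ms j) \<Longrightarrow>
                   \<phi> m z j ` A \<in> sets (Ms j)"
    and A1: "\<And>e. e > 0 \<Longrightarrow> \<exists>B. (\<forall>m. B m \<in> sets (Q m) \<and>
                 {z \<in> space (Q m). e < tv_dist (prodX K Ms)
                     (distr (\<pi> m z) (prodX K Ms) (coordmap K (\<phi> m z))) \<pi>lim} \<subseteq> B m)
               \<and> (\<lambda>m. measure (Q m) (B m)) \<longlonglongrightarrow> 0"
    and y: "y \<in> space (Q n)"
    and \<kappa>: "\<And>i. i < K \<Longrightarrow> cond_dist K Ms i (\<pi> n y) (\<kappa> i)"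
    and \<kappa>t: "\<And>i. i < K \<Longrightarrow>
               cond_dist K Ms i (distr (\<pi> n y) (prodX K Ms) (coordmap K (\<phi> n y))) (\<kappa>t i)"
    and M: "1 \<le> M"
  shows "(SUP \<mu>\<in>nbhd (prodX K Ms) (\<pi> n y) M.
            tv_dist (prodX K Ms) (iter_kernel \<mu> (gibbs_kernel K Ms \<kappa>) t) (\<pi> n y))
       = (SUP \<mu>\<in>nbhd (prodX K Ms) (distr (\<pi> n y) (prodX K Ms) (coordmap K (\<phi> n y))) M.
            tv_dist (prodX K Ms) (iter_kernel \<mu> (gibbs_kernel K Ms \<kappa>t) t)
              (distr (\<pi> n y) (prodX K Ms) (coordmap K (\<phi> n y))))"
proof -
  interpret emb: coordwise_embedding K Ms "\<phi> n y"
    by unfold_locales (use \<phi>_meas[OF y] \<phi>_inj[OF y] \<phi>_img[OF y] in auto)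
  have \<pi>: "\<pi> n y \<in> space (prob_algebra (prodX K Ms))" by (rule \<pi>_prob[OF y])
  have M0: "0 \<le> M" using M by simp
  have tv: "tv_dist (prodX K Ms) (iter_kernel \<mu> (gibbs_kernel K Ms \<kappa>) t) (\<pi> n y)
      = tv_dist (prodX K Ms) (iter_kernel (distr \<mu> (prodX K Ms) (coordmap K (\<phi> n y))) (gibbs_kernel K Ms \<kappa>t) t)
          (distr (\<pi> n y) (prodX K Ms) (coordmap K (\<phi> n y)))"
    if \<mu>: "\<mu> \<in> nbhd (prodX K Ms) (\<pi> n y) M" for \<mu>
  proof -
    from emb.iter_gibbs_kernel_distr[OF \<pi> \<kappa> \<kappa>t M0 \<mu>]
    have iter: "iter_kernel \<mu> (gibbs_kernel K Ms \<kappa>) t \<in> space (prob_algebra (prodX K Ms))"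
      and eq: "distr (iter_kernel \<mu> (gibbs_kernel K Ms \<kappa>) t) (prodX K Ms) (coordmap K (\<phi> n y))
        = iter_kernel (distr \<mu> (prodX K Ms) (coordmap K (\<phi> n y))) (gibbs_kernel K Ms \<kappa>t) t"
      by (auto simp: nbhd_def)
    show ?thesis unfolding eq[symmetric] by (rule emb.tv_dist_distr_\<Phi>[symmetric, OF iter \<pi>])
  qed
  show ?thesis
    unfolding emb.distr_\<Phi>_nbhd_image[OF \<pi> M0, symmetric] image_image
    by (rule SUP_cong[OF refl tv])
qed

end
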